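(* Fix $k\in\{1,\dots,d_n\}$. Let $X_{1k},\dots,X_{n_1k}$ be iid $N(\mu_{1k},\sigma_{1k}^2)$ and $Y_{1k},\dots,Y_{n_2k}$ be iid $N(\mu_{2k},\sigma_{2k}^2)$, the two samples independent, and let $\sigma_0^2=\max\{\sigma_{11}^2,\dots,\sigma_{1d_n}^2,\sigma_{21}^2,\dots,\sigma_{2d_n}^2\}<\infty$. Let $h(x,y)=f(x-y)$ where $f:\mathbb{R}\to\mathbb{R}$ is $L$-Lipschitz continuous, and define \[ T_{11k}=\binom{n_1}{2}^{-1}\sum_{1\le i<j\le n_1}h(X_{ik},X_{jk}),\quad T_{22k}=\binom{n_2}{2}^{-1}\sum_{1\le i<j\le n_2}h(Y_{ik},Y_{jk}),\quad T_{12k}=\frac1{n_1n_2}\sum_{i=1}^{n_1}\sum_{j=1}^{n_2}h(X_{ik},Y_{jk}). \] Then for any $t>0$ there exist positive constants $B_1$ and $B_2$ such that (a) $P[|T_{11k}-E[T_{11k}]|\ge t]\le 2e^{-n_1t^2/B_1}$ and $P[|T_{22k}-E[T_{22k}]|\ge t]\le 2e^{-n_2t^2/B_1}$; (b) $P[|T_{12k}-E[T_{12k}]|\ge t]\le 2e^{-\min\{n_1,n_2\}t^2/B_2}$. *)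

theory Defs
  imports "HOL-Probability.Probability"
begin

text \<open>Two independent Gaussian samples (one fixed coordinate k):
  X_0,...,X_{n1-1} iid N(mu1, s1^2), Y_0,...,Y_{n2-1} iid N(mu2, s2^2),
  all n1+n2 variables jointly independent.  s1, s2 are standard deviations.\<close>
definition two_sample_normal ::
  "'a measure \<Rightarrow> nat \<Rightarrow> nat \<Rightarrow> (nat \<Rightarrow> 'a \<Rightarrow> real) \<Rightarrow> (nat \<Rightarrow> 'a \<Rightarrow> real)
    \<Rightarrow> real \<Rightarrow> real \<Rightarrow> real \<Rightarrow> real \<Rightarrow> bool" where
  "two_sample_normal M n1 n2 X Y mu1 s1 mu2 s2 \<longleftrightarrow>
     prob_space M \<and> 0 < s1 \<and> 0 < s2 \<and>
     (\<forall>i<n1. distributed M lborel (X i) (normal_density mu1 s1)) \<and>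
     (\<forall>j<n2. distributed M lborel (Y j) (normal_density mu2 s2)) \<and>
     prob_space.indep_vars M (\<lambda>_. borel)
        (\<lambda>z. case z of Inl i \<Rightarrow> X i | Inr j \<Rightarrow> Y j) ({..<n1} <+> {..<n2})"

definition T11 :: "(real \<Rightarrow> real) \<Rightarrow> nat \<Rightarrow> (nat \<Rightarrow> 'a \<Rightarrow> real) \<Rightarrow> 'a \<Rightarrow> real" where
  "T11 f n X \<omega> = (\<Sum>i<n. \<Sum>j\<in>{i<..<n}. f (X i \<omega> - X j \<omega>)) / real (n choose 2)"

definition T12 :: "(real \<Rightarrow> real) \<Rightarrow> nat \<Rightarrow> nat \<Rightarrow> (nat \<Rightarrow> 'a \<Rightarrow> real) \<Rightarrow> (nat \<Rightarrow> 'a \<Rightarrow> real) \<Rightarrow> 'a \<Rightarrow> real" where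
  "T12 f n1 n2 X Y \<omega> = (\<Sum>i<n1. \<Sum>j<n2. f (X i \<omega> - Y j \<omega>)) / (real n1 * real n2)"

end

(*
  Each statistic is a function of the n1 + n2 independent Gaussian coordinates that is Lipschitz
  for a weighted l1 distance: T11 moves by at most 2L/n1 times the change of each X-coordinate
  (each index lies in n1 - 1 of the n1 (n1 - 1) / 2 pairs), T12 by L/n1 resp. L/n2.
  A c-Lipschitz function of one Gaussian N(mu, sigma^2) has centred moment generating function at
  most exp (l^2 c^2 sigma^2): by Jensen it is dominated by that of g y - g y' for an independent
  copy y', which is symmetric, so it suffices to bound exp u + exp (- u), and this increases with
  |u| <= |l c (y - y')|, whose moments are explicit Gaussian ones.  Integrating out one coordinate
  at a time (the conditional mean is again coordinatewise Lipschitz) multiplies these bounds, so a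
  coordinatewise c-Lipschitz statistic has moment generating function at most
  exp (l^2 sum_i c_i^2 sigma_i^2), and the Chernoff bound gives the tail
  2 exp (- t^2 / (4 sum_i c_i^2 sigma_i^2)).  With the weights above the sum is at most
  4 L^2 sigma0^2 / n1 for T11 and 2 L^2 sigma0^2 / min n1 n2 for T12.
*)
theory Submission
  imports Defs
begin

section \<open>Gaussian moment generating function\<close>

abbreviation normal_measure :: "real \<Rightarrow> real \<Rightarrow> real measure" where
  "normal_measure \<mu> \<sigma> \<equiv> density lborel (normal_density \<mu> \<sigma>)"

lemma normal_density_mult_exp:
  assumes "0 < \<sigma>"
  shows "normal_density \<mu> \<sigma> y * exp (a * y)
    = exp (a * \<mu> + a\<^sup>2 * \<sigma>\<^sup>2 / 2) * normal_density (\<mu> + a * \<sigma>\<^sup>2) \<sigma> y"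
proof -
  have "- (y - \<mu>)\<^sup>2 / (2 * \<sigma>\<^sup>2) + a * y = (a * \<mu> + a\<^sup>2 * \<sigma>\<^sup>2 / 2) - (y - (\<mu> + a * \<sigma>\<^sup>2))\<^sup>2 / (2 * \<sigma>\<^sup>2)"
    using assms by (simp add: field_simps power2_eq_square)
  then show ?thesis
    unfolding normal_density_def by (simp add: mult_exp_exp)
qed

lemma nn_integral_exp_normal:
  assumes "0 < \<sigma>"
  shows "(\<integral>\<^sup>+y. ennreal (exp (a * y)) \<partial>normal_measure \<mu> \<sigma>) = ennreal (exp (a * \<mu> + a\<^sup>2 * \<sigma>\<^sup>2 / 2))"
proof -
  have "(\<integral>\<^sup>+y. ennreal (exp (a * y)) \<partial>normal_measure \<mu> \<sigma>)
      = (\<integral>\<^sup>+y. ennreal (normal_density \<mu> \<sigma> y * exp (a * y)) \<partial>lborel)"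
    by (subst nn_integral_density) (auto simp: ennreal_mult' normal_density_nonneg)
  also have "\<dots> = (\<integral>\<^sup>+y. ennreal (exp (a * \<mu> + a\<^sup>2 * \<sigma>\<^sup>2 / 2))
      * ennreal (normal_density (\<mu> + a * \<sigma>\<^sup>2) \<sigma> y) \<partial>lborel)"
    by (simp add: normal_density_mult_exp[OF assms] ennreal_mult normal_density_nonneg)
  also have "\<dots> = ennreal (exp (a * \<mu> + a\<^sup>2 * \<sigma>\<^sup>2 / 2))"
    using assms by (subst nn_integral_cmult) (auto simp: nn_integral_eq_integral normal_density_nonneg)
  finally show ?thesis .
qed

lemma integrable_exp_normal:
  assumes "0 < \<sigma>"
  shows "integrable (normal_measure \<mu> \<sigma>) (\<lambda>y. exp (a * y))"
proof (rule integrableI_bounded)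
  show "(\<lambda>y. exp (a * y)) \<in> borel_measurable (normal_measure \<mu> \<sigma>)"
    by simp
  show "(\<integral>\<^sup>+y. ennreal (norm (exp (a * y))) \<partial>normal_measure \<mu> \<sigma>) < \<infinity>"
    by (simp add: nn_integral_exp_normal[OF assms])
qed

lemma abs_le_exp_plus_exp_minus: "\<bar>u :: real\<bar> \<le> exp u + exp (- u)"
  using exp_ge_add_one_self[of u] exp_ge_add_one_self[of "- u"] exp_gt_zero[of u] exp_gt_zero[of "- u"]
  by linarith

lemma exp_plus_exp_minus_mono:
  assumes "\<bar>u\<bar> \<le> \<bar>v :: real\<bar>"
  shows "exp u + exp (- u) \<le> exp v + exp (- v)"
proof -
  have cosh_abs: "cosh \<bar>x\<bar> = cosh x" for x :: real
    by (cases "0 \<le> x") auto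
  have "cosh u \<le> cosh v"
    using assms by (subst (1 2) cosh_abs[symmetric], subst cosh_real_nonneg_le_iff) auto
  then show ?thesis
    by (simp add: cosh_def)
qed

lemma lipschitz_on_UNIV_abs_le:
  assumes "c-lipschitz_on UNIV (g :: real \<Rightarrow> real)"
  shows "\<bar>g y\<bar> \<le> \<bar>g 0\<bar> + c * \<bar>y\<bar>"
  using lipschitz_onD[OF assms, of y 0] by (simp add: dist_real_def)

lemma lipschitz_on_UNIV_measurable:
  "c-lipschitz_on UNIV (g :: real \<Rightarrow> real) \<Longrightarrow> g \<in> borel_measurable borel"
  by (intro borel_measurable_continuous_onI lipschitz_on_continuous_on)

lemma integrable_normal_lipschitz:
  fixes g :: "real \<Rightarrow> real"
  assumes \<sigma>: "0 < \<sigma>" and lip: "c-lipschitz_on UNIV g"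
  shows "integrable (normal_measure \<mu> \<sigma>) g"
proof (rule Bochner_Integration.integrable_bound)
  interpret prob_space "normal_measure \<mu> \<sigma>"
    using \<sigma> by (rule prob_space_normal_density)
  show "integrable (normal_measure \<mu> \<sigma>) (\<lambda>y. \<bar>g 0\<bar> + c * (exp (1 * y) + exp (- 1 * y)))"
    using \<sigma> by (intro Bochner_Integration.integrable_add integrable_mult_right integrable_const
        integrable_exp_normal)
  have "\<bar>g y\<bar> \<le> \<bar>g 0\<bar> + c * (exp (1 * y) + exp (- 1 * y))" for y
  proof -
    have "c * \<bar>y\<bar> \<le> c * (exp (1 * y) + exp (- 1 * y))"
      using lipschitz_on_nonneg[OF lip] abs_le_exp_plus_exp_minus[of y] by (simp add: mult_left_mono)
    then show ?thesis
      using lipschitz_on_UNIV_abs_le[OF lip, of y] by linarith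
  qed
  then show "AE y in normal_measure \<mu> \<sigma>. norm (g y) \<le> norm (\<bar>g 0\<bar> + c * (exp (1 * y) + exp (- 1 * y)))"
    by (auto intro: order_trans[OF _ abs_ge_self])
qed (use lipschitz_on_UNIV_measurable[OF lip] in simp)

section \<open>Sub-Gaussian functions\<close>

lemma (in prob_space) exp_expectation_le_nn_integral:
  assumes "integrable M X"
  shows "ennreal (exp (expectation X)) \<le> (\<integral>\<^sup>+x. ennreal (exp (X x)) \<partial>M)"
proof (cases "integrable M (\<lambda>x. exp (X x))")
  case True
  have "exp (expectation X) \<le> expectation (\<lambda>x. exp (X x))"
    using jensens_inequality[where I = UNIV and q = exp, OF assms _ _ True exp_convex] by simp
  with True show ?thesis
    by (simp add: nn_integral_eq_integral)
next
  case False
  have "(\<lambda>x. exp (X x)) \<in> borel_measurable M"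
    using measurable_compose[OF borel_measurable_integrable[OF assms] borel_measurable_exp] .
  with False have "\<not> (\<integral>\<^sup>+x. ennreal (exp (X x)) \<partial>M) < \<infinity>"
    by (simp add: integrable_iff_bounded)
  then show ?thesis
    by (simp add: less_top[symmetric])
qed

text \<open>Here \<open>v\<close> is half the usual variance proxy: \<open>N(m, s\<^sup>2)\<close> satisfies the bound with \<open>v = s\<^sup>2 / 2\<close>.\<close>

definition subgaussian :: "'a measure \<Rightarrow> ('a \<Rightarrow> real) \<Rightarrow> real \<Rightarrow> bool" where
  "subgaussian M F v \<longleftrightarrow> integrable M F \<and>
     (\<forall>l. (\<integral>\<^sup>+x. ennreal (exp (l * (F x - (\<integral>x. F x \<partial>M)))) \<partial>M) \<le> ennreal (exp (l\<^sup>2 * v)))"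

lemma subgaussian_mono: "subgaussian M F v \<Longrightarrow> v \<le> w \<Longrightarrow> subgaussian M F w"
  unfolding subgaussian_def
  by (meson ennreal_leI exp_le_cancel_iff mult_left_mono order_trans zero_le_power2)

lemma nn_integral_exp_lipschitz_diff_normal:
  fixes g :: "real \<Rightarrow> real"
  assumes \<sigma>: "0 < \<sigma>" and lip: "c-lipschitz_on UNIV g"
  shows "(\<integral>\<^sup>+y. \<integral>\<^sup>+y'. ennreal (exp (l * (g y - g y'))) \<partial>normal_measure \<mu> \<sigma> \<partial>normal_measure \<mu> \<sigma>)
    \<le> ennreal (exp (l\<^sup>2 * c\<^sup>2 * \<sigma>\<^sup>2))"
proof -
  let ?N = "normal_measure \<mu> \<sigma>"
  interpret N: prob_space ?N
    using \<sigma> by (rule prob_space_normal_density)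
  interpret pair_prob_space ?N ?N ..
  have [measurable]: "g \<in> borel_measurable borel"
    using lip by (rule lipschitz_on_UNIV_measurable)
  define E where "E u = ennreal (exp u)" for u
  define a where "a = l * c"
  define mgf where "mgf b = E (b * \<mu> + b\<^sup>2 * \<sigma>\<^sup>2 / 2)" for b
  have [measurable]: "E \<in> borel_measurable borel"
    unfolding E_def by measurable
  have mgf: "(\<integral>\<^sup>+y. E (b * y) \<partial>?N) = mgf b" for b
    unfolding E_def mgf_def by (rule nn_integral_exp_normal[OF \<sigma>])
  define D where "D = (\<integral>\<^sup>+y. \<integral>\<^sup>+y'. E (l * (g y - g y')) \<partial>?N \<partial>?N)"
  have swap: "D = (\<integral>\<^sup>+y. \<integral>\<^sup>+y'. E (l * (g y' - g y)) \<partial>?N \<partial>?N)"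
    unfolding D_def by (rule Fubini') measurable
  have sym: "E (l * (g y - g y')) + E (l * (g y' - g y)) \<le> E (a * y) * E (- a * y') + E (- a * y) * E (a * y')"
    for y y'
  proof -
    have "\<bar>l * (g y - g y')\<bar> \<le> \<bar>a * (y - y')\<bar>"
      using lipschitz_onD[OF lip, of y y'] lipschitz_on_nonneg[OF lip]
      by (simp add: a_def dist_real_def abs_mult mult.assoc mult_left_mono)
    then have "exp (l * (g y - g y')) + exp (- (l * (g y - g y'))) \<le> exp (a * (y - y')) + exp (- (a * (y - y')))"
      by (rule exp_plus_exp_minus_mono)
    then show ?thesis
      unfolding E_def
      by (simp add: mult_exp_exp algebra_simps flip: ennreal_mult' ennreal_plus del: ennreal_plus)
  qed
  have "D + D = (\<integral>\<^sup>+y. \<integral>\<^sup>+y'. E (l * (g y - g y')) + E (l * (g y' - g y)) \<partial>?N \<partial>?N)"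
    by (subst (2) swap) (simp add: D_def nn_integral_add)
  also have "\<dots> \<le> (\<integral>\<^sup>+y. \<integral>\<^sup>+y'. E (a * y) * E (- a * y') + E (- a * y) * E (a * y') \<partial>?N \<partial>?N)"
    by (intro nn_integral_mono sym)
  also have "\<dots> = (\<integral>\<^sup>+y. E (a * y) * mgf (- a) + E (- a * y) * mgf a \<partial>?N)"
    by (intro nn_integral_cong) (simp add: nn_integral_add nn_integral_cmult mgf mgf[of "- a", simplified])
  also have "\<dots> = mgf a * mgf (- a) + mgf (- a) * mgf a"
    by (simp add: nn_integral_add nn_integral_multc mgf mgf[of "- a", simplified])
  also have "\<dots> = E (l\<^sup>2 * c\<^sup>2 * \<sigma>\<^sup>2) + E (l\<^sup>2 * c\<^sup>2 * \<sigma>\<^sup>2)"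
    unfolding mgf_def E_def a_def
    by (simp add: mult_exp_exp power_mult_distrib algebra_simps flip: ennreal_mult')
  finally have "D + D \<le> E (l\<^sup>2 * c\<^sup>2 * \<sigma>\<^sup>2) + E (l\<^sup>2 * c\<^sup>2 * \<sigma>\<^sup>2)" .
  then have "D \<le> E (l\<^sup>2 * c\<^sup>2 * \<sigma>\<^sup>2)"
    by (meson add_mono not_le order_less_imp_le add_strict_mono)
  then show ?thesis
    unfolding D_def E_def .
qed

lemma subgaussian_normal_lipschitz:
  fixes g :: "real \<Rightarrow> real"
  assumes \<sigma>: "0 < \<sigma>" and lip: "c-lipschitz_on UNIV g"
  shows "subgaussian (normal_measure \<mu> \<sigma>) g (c\<^sup>2 * \<sigma>\<^sup>2)"
proof -
  let ?N = "normal_measure \<mu> \<sigma>"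
  interpret N: prob_space ?N
    using \<sigma> by (rule prob_space_normal_density)
  have [measurable]: "g \<in> borel_measurable borel"
    using lip by (rule lipschitz_on_UNIV_measurable)
  have int: "integrable ?N g"
    using \<sigma> lip by (rule integrable_normal_lipschitz)
  define m where "m = (\<integral>y. g y \<partial>?N)"
  have jensen: "ennreal (exp (l * (g y - m))) \<le> (\<integral>\<^sup>+y'. ennreal (exp (l * (g y - g y'))) \<partial>?N)" for l y
  proof -
    have "ennreal (exp (- l * m)) \<le> (\<integral>\<^sup>+y'. ennreal (exp (- l * g y')) \<partial>?N)"
      using N.exp_expectation_le_nn_integral[of "\<lambda>y'. - l * g y'"] int by (simp add: m_def)
    then have "ennreal (exp (l * g y)) * ennreal (exp (- l * m))
        \<le> ennreal (exp (l * g y)) * (\<integral>\<^sup>+y'. ennreal (exp (- l * g y')) \<partial>?N)"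
      by (rule mult_left_mono) simp
    also have "\<dots> = (\<integral>\<^sup>+y'. ennreal (exp (l * g y)) * ennreal (exp (- l * g y')) \<partial>?N)"
      by (rule nn_integral_cmult[symmetric]) measurable
    finally show ?thesis
      by (simp add: mult_exp_exp algebra_simps flip: ennreal_mult')
  qed
  have "(\<integral>\<^sup>+y. ennreal (exp (l * (g y - m))) \<partial>?N) \<le> ennreal (exp (l\<^sup>2 * (c\<^sup>2 * \<sigma>\<^sup>2)))" for l
    using order_trans[OF nn_integral_mono[OF jensen] nn_integral_exp_lipschitz_diff_normal[OF \<sigma> lip]]
    by (simp add: mult.assoc)
  with int show ?thesis
    unfolding subgaussian_def m_def by blast
qed

lemma subgaussian_uminus:
  assumes "subgaussian M F v"
  shows "subgaussian M (\<lambda>x. - F x) v"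
proof -
  have "(\<integral>\<^sup>+x. ennreal (exp (l * (- F x - (\<integral>x. - F x \<partial>M)))) \<partial>M)
      = (\<integral>\<^sup>+x. ennreal (exp ((- l) * (F x - (\<integral>x. F x \<partial>M)))) \<partial>M)" for l
    by (simp add: algebra_simps)
  with assms show ?thesis
    unfolding subgaussian_def by (metis integrable_minus power2_minus)
qed

lemma subgaussian_distr:
  assumes \<Phi>[measurable]: "\<Phi> \<in> measurable M N" and F[measurable]: "F \<in> borel_measurable N"
    and sub: "subgaussian (distr M N \<Phi>) F v"
  shows "subgaussian M (\<lambda>x. F (\<Phi> x)) v"
proof -
  have int: "integrable M (\<lambda>x. F (\<Phi> x))"
    using sub integrable_distr_eq[OF \<Phi> F] by (simp add: subgaussian_def)
  have "(\<integral>x. F x \<partial>distr M N \<Phi>) = (\<integral>x. F (\<Phi> x) \<partial>M)"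
    using \<Phi> F by (rule integral_distr)
  moreover have "(\<integral>\<^sup>+x. ennreal (exp (l * (F x - m))) \<partial>distr M N \<Phi>)
      = (\<integral>\<^sup>+x. ennreal (exp (l * (F (\<Phi> x) - m))) \<partial>M)" for l m
    using \<Phi> F by (intro nn_integral_distr) measurable
  ultimately show ?thesis
    using sub int by (simp add: subgaussian_def)
qed

lemma (in prob_space) subgaussian_upper_tail:
  assumes sub: "subgaussian M F v" and v: "0 < v" and t: "0 < t"
  shows "emeasure M {x \<in> space M. t \<le> F x - expectation F} \<le> ennreal (exp (- t\<^sup>2 / (4 * v)))"
proof -
  define s where "s = t / (2 * v)"
  have s: "0 < s"
    using v t by (simp add: s_def)
  have [measurable]: "F \<in> borel_measurable M"
    using sub unfolding subgaussian_def by (blast intro: borel_measurable_integrable)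
  have "emeasure M {x \<in> space M. t \<le> F x - expectation F}
      \<le> ennreal (exp (- s * t)) * (\<integral>\<^sup>+x. ennreal (exp (s * (F x - expectation F))) * indicator (space M) x \<partial>M)"
    by (rule Chernoff_ineq_nn_integral_ge[OF s]) measurable
  also have "(\<integral>\<^sup>+x. ennreal (exp (s * (F x - expectation F))) * indicator (space M) x \<partial>M)
      = (\<integral>\<^sup>+x. ennreal (exp (s * (F x - expectation F))) \<partial>M)"
    by (intro nn_integral_cong) simp
  also have "ennreal (exp (- s * t)) * \<dots> \<le> ennreal (exp (- s * t)) * ennreal (exp (s\<^sup>2 * v))"
    using sub by (intro mult_left_mono) (auto simp: subgaussian_def)
  also have "\<dots> = ennreal (exp (- t\<^sup>2 / (4 * v)))"
    using v by (simp add: s_def mult_exp_exp field_simps power2_eq_square flip: ennreal_mult')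
  finally show ?thesis .
qed

lemma (in prob_space) subgaussian_tail:
  assumes sub: "subgaussian M F v" and v: "0 < v" and t: "0 < t"
  shows "prob {x \<in> space M. t \<le> \<bar>F x - expectation F\<bar>} \<le> 2 * exp (- t\<^sup>2 / (4 * v))"
proof -
  have [measurable]: "F \<in> borel_measurable M"
    using sub unfolding subgaussian_def by (blast intro: borel_measurable_integrable)
  have "emeasure M {x \<in> space M. t \<le> \<bar>F x - expectation F\<bar>}
      = emeasure M ({x \<in> space M. t \<le> F x - expectation F}
          \<union> {x \<in> space M. t \<le> - F x - expectation (\<lambda>x. - F x)})"
    by (rule arg_cong[where f = "emeasure M"]) auto
  also have "\<dots> \<le> emeasure M {x \<in> space M. t \<le> F x - expectation F}
      + emeasure M {x \<in> space M. t \<le> - F x - expectation (\<lambda>x. - F x)}"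
    by (rule emeasure_subadditive) measurable
  also have "\<dots> \<le> ennreal (exp (- t\<^sup>2 / (4 * v))) + ennreal (exp (- t\<^sup>2 / (4 * v)))"
    using sub v t by (intro add_mono subgaussian_upper_tail subgaussian_uminus)
  finally show ?thesis
    by (simp add: emeasure_eq_measure ennreal_le_iff flip: ennreal_plus)
qed

section \<open>Tensorisation over finite products\<close>

text \<open>Points are extensional functions on \<open>I\<close>, i.e. elements of the space of \<open>PiM I (\<lambda>_. borel)\<close>.\<close>

definition coordinatewise_lipschitz :: "'i set \<Rightarrow> ('i \<Rightarrow> real) \<Rightarrow> (('i \<Rightarrow> real) \<Rightarrow> real) \<Rightarrow> bool" where
  "coordinatewise_lipschitz I c F \<longleftrightarrow> (\<forall>i\<in>I. 0 \<le> c i) \<and>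
     (\<forall>x\<in>I \<rightarrow>\<^sub>E UNIV. \<forall>y\<in>I \<rightarrow>\<^sub>E UNIV. \<bar>F x - F y\<bar> \<le> (\<Sum>i\<in>I. c i * \<bar>x i - y i\<bar>))"

lemma sum_weighted_dist_fun_upd:
  assumes "finite I" and "i \<notin> I"
  shows "(\<Sum>j\<in>insert i I. c j * \<bar>(x(i := y)) j - (x'(i := y')) j\<bar>)
    = c i * \<bar>y - y'\<bar> + (\<Sum>j\<in>I. c j * \<bar>x j - x' j\<bar>)"
proof -
  have "(\<Sum>j\<in>I. c j * \<bar>(x(i := y)) j - (x'(i := y')) j\<bar>) = (\<Sum>j\<in>I. c j * \<bar>x j - x' j\<bar>)"
    using assms(2) by (intro sum.cong) auto
  with assms show ?thesis
    by simp
qed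

lemma coordinatewise_lipschitz_section:
  assumes "finite I" and "i \<notin> I" and F: "coordinatewise_lipschitz (insert i I) c F"
    and x: "x \<in> I \<rightarrow>\<^sub>E UNIV"
  shows "(c i)-lipschitz_on UNIV (\<lambda>y. F (x(i := y)))"
proof (rule lipschitz_onI)
  fix y y' :: real
  have "x(i := z) \<in> insert i I \<rightarrow>\<^sub>E UNIV" for z
    using x by (simp add: PiE_fun_upd)
  with F have "\<bar>F (x(i := y)) - F (x(i := y'))\<bar> \<le> (\<Sum>j\<in>insert i I. c j * \<bar>(x(i := y)) j - (x(i := y')) j\<bar>)"
    unfolding coordinatewise_lipschitz_def by blast
  also have "\<dots> = c i * \<bar>y - y'\<bar>"
    by (simp only: sum_weighted_dist_fun_upd[OF assms(1,2)]) simp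
  finally show "dist (F (x(i := y))) (F (x(i := y'))) \<le> c i * dist y y'"
    by (simp add: dist_real_def)
qed (use F in \<open>simp add: coordinatewise_lipschitz_def\<close>)

lemma coordinatewise_lipschitz_fix_coordinate:
  fixes y :: real
  assumes "finite I" and "i \<notin> I" and F: "coordinatewise_lipschitz (insert i I) c F"
  shows "coordinatewise_lipschitz I c (\<lambda>x. F (x(i := y)))"
  unfolding coordinatewise_lipschitz_def
proof (intro conjI ballI)
  fix x x' :: "_ \<Rightarrow> real"
  assume "x \<in> I \<rightarrow>\<^sub>E UNIV" "x' \<in> I \<rightarrow>\<^sub>E UNIV"
  then have "x(i := y) \<in> insert i I \<rightarrow>\<^sub>E UNIV" "x'(i := y) \<in> insert i I \<rightarrow>\<^sub>E UNIV"
    by (simp_all add: PiE_fun_upd)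
  with F have "\<bar>F (x(i := y)) - F (x'(i := y))\<bar> \<le> (\<Sum>j\<in>insert i I. c j * \<bar>(x(i := y)) j - (x'(i := y)) j\<bar>)"
    unfolding coordinatewise_lipschitz_def by blast
  also have "\<dots> = (\<Sum>j\<in>I. c j * \<bar>x j - x' j\<bar>)"
    by (simp only: sum_weighted_dist_fun_upd[OF assms(1,2)]) simp
  finally show "\<bar>F (x(i := y)) - F (x'(i := y))\<bar> \<le> (\<Sum>j\<in>I. c j * \<bar>x j - x' j\<bar>)" .
qed (use F in \<open>simp add: coordinatewise_lipschitz_def\<close>)

locale lipschitz_concentrated_product =
  fixes N :: "'i \<Rightarrow> real measure" and v :: "'i \<Rightarrow> real"
  assumes prob_space_N: "\<And>i. prob_space (N i)"
    and sets_N [measurable_cong]: "\<And>i. sets (N i) = sets borel"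
    and subgaussian_lipschitz: "\<And>i c g. c-lipschitz_on UNIV (g :: real \<Rightarrow> real) \<Longrightarrow> subgaussian (N i) g (c\<^sup>2 * v i)"
begin

sublocale product_sigma_finite N
  by (simp add: product_sigma_finite_def prob_space_imp_sigma_finite prob_space_N)

lemma space_N [simp]: "space (N i) = UNIV"
  using sets_eq_imp_space_eq[OF sets_N] by simp

lemma measure_N_UNIV [simp]: "measure (N i) UNIV = 1"
  using prob_space.prob_space[OF prob_space_N] by simp

lemma space_PiM_N: "space (PiM I N) = I \<rightarrow>\<^sub>E UNIV"
  by (simp add: space_PiM)

lemma integrable_section:
  assumes "finite I" and "i \<notin> I" and "coordinatewise_lipschitz (insert i I) c F"
    and "x \<in> space (PiM I N)"
  shows "integrable (N i) (\<lambda>y. F (x(i := y)))"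
  using subgaussian_lipschitz[OF coordinatewise_lipschitz_section[OF assms(1-3)]] assms(4)
  by (simp add: subgaussian_def space_PiM_N)

lemma borel_measurable_section_integral:
  fixes F :: "('i \<Rightarrow> real) \<Rightarrow> real"
  assumes "i \<notin> I" and [measurable]: "F \<in> borel_measurable (PiM (insert i I) N)"
  shows "(\<lambda>x. \<integral>y. F (x(i := y)) \<partial>N i) \<in> borel_measurable (PiM I N)"
proof -
  have "(\<lambda>(x, y). x(i := y)) \<in> measurable (PiM I N \<Otimes>\<^sub>M N i) (PiM (insert i I) N)"
    by (simp add: case_prod_beta' measurable_fun_upd[where J = I])
  then have "(\<lambda>(x, y). F (x(i := y))) \<in> borel_measurable (PiM I N \<Otimes>\<^sub>M N i)"
    by measurable
  then show ?thesis
    by (rule sigma_finite_measure.borel_measurable_lebesgue_integral[OF sigma_finite_measures,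
          where f = "\<lambda>x y. F (x(i := y))"])
qed

lemma coordinatewise_lipschitz_section_integral:
  assumes I: "finite I" "i \<notin> I" and F: "coordinatewise_lipschitz (insert i I) c F"
  shows "coordinatewise_lipschitz I c (\<lambda>x. \<integral>y. F (x(i := y)) \<partial>N i)"
proof -
  interpret Ni: prob_space "N i"
    by (rule prob_space_N)
  have le: "(\<integral>y. F (x(i := y)) \<partial>N i) \<le> (\<integral>y. F (x'(i := y)) \<partial>N i) + (\<Sum>j\<in>I. c j * \<bar>x j - x' j\<bar>)"
    if x: "x \<in> I \<rightarrow>\<^sub>E UNIV" and x': "x' \<in> I \<rightarrow>\<^sub>E UNIV" for x x'
  proof -
    have "F (x(i := y)) \<le> F (x'(i := y)) + (\<Sum>j\<in>I. c j * \<bar>x j - x' j\<bar>)" for y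
    proof -
      have "\<bar>F (x(i := y)) - F (x'(i := y))\<bar> \<le> (\<Sum>j\<in>I. c j * \<bar>x j - x' j\<bar>)"
        using coordinatewise_lipschitz_fix_coordinate[OF I F, of y] x x'
        unfolding coordinatewise_lipschitz_def by blast
      then show ?thesis
        by linarith
    qed
    then have "(\<integral>y. F (x(i := y)) \<partial>N i) \<le> (\<integral>y. F (x'(i := y)) + (\<Sum>j\<in>I. c j * \<bar>x j - x' j\<bar>) \<partial>N i)"
      using integrable_section[OF I F] x x'
      by (intro integral_mono) (auto simp: space_PiM_N abs_le_iff)
    then show ?thesis
      using integrable_section[OF I F] x' by (simp add: space_PiM_N)
  qed
  show ?thesis
    unfolding coordinatewise_lipschitz_def
  proof (intro conjI ballI)
    fix x x' :: "'i \<Rightarrow> real"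
    assume "x \<in> I \<rightarrow>\<^sub>E UNIV" "x' \<in> I \<rightarrow>\<^sub>E UNIV"
    moreover have "(\<Sum>j\<in>I. c j * \<bar>x' j - x j\<bar>) = (\<Sum>j\<in>I. c j * \<bar>x j - x' j\<bar>)"
      by (simp add: abs_minus_commute)
    ultimately show "\<bar>(\<integral>y. F (x(i := y)) \<partial>N i) - (\<integral>y. F (x'(i := y)) \<partial>N i)\<bar> \<le> (\<Sum>j\<in>I. c j * \<bar>x j - x' j\<bar>)"
      using le[of x x'] le[of x' x] by linarith
  qed (use F in \<open>simp add: coordinatewise_lipschitz_def\<close>)
qed

lemma integrable_PiM_insert:
  fixes F :: "('i \<Rightarrow> real) \<Rightarrow> real"
  assumes I: "finite I" "i \<notin> I" and [measurable]: "F \<in> borel_measurable (PiM (insert i I) N)"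
    and F: "coordinatewise_lipschitz (insert i I) c F"
    and F0: "integrable (PiM I N) (\<lambda>x. F (x(i := 0)))"
  shows "integrable (PiM (insert i I) N) F"
proof (rule integrableI_bounded)
  interpret PI: prob_space "PiM I N"
    by (intro prob_space_PiM prob_space_N)
  have [measurable]: "(\<lambda>x. F (x(i := 0))) \<in> borel_measurable (PiM I N)"
    using F0 by (rule borel_measurable_integrable)
  have "integrable (N i) (\<lambda>y. y)"
    using subgaussian_lipschitz[OF lipschitz_on_id] by (simp add: subgaussian_def)
  then have abs_fin: "(\<integral>\<^sup>+y. ennreal \<bar>y\<bar> \<partial>N i) < \<infinity>"
    by (simp add: integrable_iff_bounded)
  have F0_fin: "(\<integral>\<^sup>+x. ennreal \<bar>F (x(i := 0))\<bar> \<partial>PiM I N) < \<infinity>"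
    using F0 by (simp add: integrable_iff_bounded)
  have "(\<integral>\<^sup>+x. ennreal (norm (F x)) \<partial>PiM (insert i I) N)
      = (\<integral>\<^sup>+x. \<integral>\<^sup>+y. ennreal (norm (F (x(i := y)))) \<partial>N i \<partial>PiM I N)"
    by (rule product_nn_integral_insert[OF I]) measurable
  also have "\<dots> \<le> (\<integral>\<^sup>+x. \<integral>\<^sup>+y. ennreal \<bar>F (x(i := 0))\<bar> + ennreal (c i) * ennreal \<bar>y\<bar> \<partial>N i \<partial>PiM I N)"
  proof (intro nn_integral_mono)
    fix x y assume "x \<in> space (PiM I N)"
    then have "\<bar>F (x(i := y)) - F (x(i := 0))\<bar> \<le> c i * \<bar>y\<bar>"
      using lipschitz_onD[OF coordinatewise_lipschitz_section[OF I F], of x y 0]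
      by (simp add: space_PiM_N dist_real_def)
    moreover have "0 \<le> c i"
      using F by (simp add: coordinatewise_lipschitz_def)
    ultimately show "ennreal (norm (F (x(i := y)))) \<le> ennreal \<bar>F (x(i := 0))\<bar> + ennreal (c i) * ennreal \<bar>y\<bar>"
      by (simp add: ennreal_mult'[symmetric] ennreal_plus[symmetric] del: ennreal_plus)
  qed
  also have "\<dots> = (\<integral>\<^sup>+x. ennreal \<bar>F (x(i := 0))\<bar> \<partial>PiM I N) + ennreal (c i) * (\<integral>\<^sup>+y. ennreal \<bar>y\<bar> \<partial>N i)"
    by (simp add: nn_integral_add nn_integral_cmult prob_space.emeasure_space_1[OF prob_space_N, simplified]
        PI.emeasure_space_1)
  also have "\<dots> < \<infinity>"
    using F0_fin abs_fin by (simp add: ennreal_mult_less_top)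
  finally show "(\<integral>\<^sup>+x. ennreal (norm (F x)) \<partial>PiM (insert i I) N) < \<infinity>" .
qed measurable

lemma nn_integral_exp_PiM_insert_le:
  fixes F :: "('i \<Rightarrow> real) \<Rightarrow> real"
  assumes I: "finite I" "i \<notin> I" and [measurable]: "F \<in> borel_measurable (PiM (insert i I) N)"
    and [measurable]: "G \<in> borel_measurable (PiM I N)"
    and fiber: "\<And>x. x \<in> space (PiM I N) \<Longrightarrow>
      (\<integral>\<^sup>+y. ennreal (exp (l * (F (x(i := y)) - G x))) \<partial>N i) \<le> ennreal (exp a)"
  shows "(\<integral>\<^sup>+x. ennreal (exp (l * (F x - m))) \<partial>PiM (insert i I) N)
    \<le> (\<integral>\<^sup>+x. ennreal (exp (l * (G x - m))) \<partial>PiM I N) * ennreal (exp a)"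
proof -
  have "(\<integral>\<^sup>+x. ennreal (exp (l * (F x - m))) \<partial>PiM (insert i I) N)
      = (\<integral>\<^sup>+x. \<integral>\<^sup>+y. ennreal (exp (l * (F (x(i := y)) - m))) \<partial>N i \<partial>PiM I N)"
    by (rule product_nn_integral_insert[OF I]) measurable
  also have "\<dots> = (\<integral>\<^sup>+x. ennreal (exp (l * (G x - m)))
      * (\<integral>\<^sup>+y. ennreal (exp (l * (F (x(i := y)) - G x))) \<partial>N i) \<partial>PiM I N)"
  proof (intro nn_integral_cong)
    fix x assume x: "x \<in> space (PiM I N)"
    have [measurable]: "(\<lambda>y. F (x(i := y))) \<in> borel_measurable (N i)"
      using measurable_component_update[OF x I(2)] by measurable
    have "(\<integral>\<^sup>+y. ennreal (exp (l * (F (x(i := y)) - m))) \<partial>N i)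
        = (\<integral>\<^sup>+y. ennreal (exp (l * (G x - m))) * ennreal (exp (l * (F (x(i := y)) - G x))) \<partial>N i)"
      by (intro nn_integral_cong) (simp add: mult_exp_exp algebra_simps flip: ennreal_mult')
    also have "\<dots> = ennreal (exp (l * (G x - m))) * (\<integral>\<^sup>+y. ennreal (exp (l * (F (x(i := y)) - G x))) \<partial>N i)"
      by (rule nn_integral_cmult) measurable
    finally show "(\<integral>\<^sup>+y. ennreal (exp (l * (F (x(i := y)) - m))) \<partial>N i)
        = ennreal (exp (l * (G x - m))) * (\<integral>\<^sup>+y. ennreal (exp (l * (F (x(i := y)) - G x))) \<partial>N i)" .
  qed
  also have "\<dots> \<le> (\<integral>\<^sup>+x. ennreal (exp (l * (G x - m))) * ennreal (exp a) \<partial>PiM I N)"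
    by (intro nn_integral_mono mult_left_mono fiber) auto
  also have "\<dots> = (\<integral>\<^sup>+x. ennreal (exp (l * (G x - m))) \<partial>PiM I N) * ennreal (exp a)"
    by (rule nn_integral_multc) measurable
  finally show ?thesis .
qed

lemma subgaussian_PiM_insert:
  fixes F :: "('i \<Rightarrow> real) \<Rightarrow> real"
  assumes I: "finite I" "i \<notin> I" and Fm [measurable]: "F \<in> borel_measurable (PiM (insert i I) N)"
    and F: "coordinatewise_lipschitz (insert i I) c F"
    and IH: "\<And>G. G \<in> borel_measurable (PiM I N) \<Longrightarrow> coordinatewise_lipschitz I c G \<Longrightarrow>
      subgaussian (PiM I N) G V"
  shows "subgaussian (PiM (insert i I) N) F ((c i)\<^sup>2 * v i + V)"
proof -
  define G where "G x = (\<integral>y. F (x(i := y)) \<partial>N i)" for x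
  have Gm [measurable]: "G \<in> borel_measurable (PiM I N)"
    unfolding G_def using I(2) Fm by (rule borel_measurable_section_integral)
  have G: "subgaussian (PiM I N) G V"
    unfolding G_def using Gm[unfolded G_def] coordinatewise_lipschitz_section_integral[OF I F] by (rule IH)
  have "(\<lambda>x. x(i := 0)) \<in> measurable (PiM I N) (PiM (insert i I) N)"
    by (rule measurable_fun_upd[where J = I]) auto
  then have "subgaussian (PiM I N) (\<lambda>x. F (x(i := 0))) V"
    using coordinatewise_lipschitz_fix_coordinate[OF I F] by (intro IH) measurable
  then have F_int: "integrable (PiM (insert i I) N) F"
    using integrable_PiM_insert[OF I Fm F] by (simp add: subgaussian_def)
  have mean: "(\<integral>x. F x \<partial>PiM (insert i I) N) = (\<integral>x. G x \<partial>PiM I N)"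
    unfolding G_def using I F_int by (rule product_integral_insert)
  have fiber: "(\<integral>\<^sup>+y. ennreal (exp (l * (F (x(i := y)) - G x))) \<partial>N i) \<le> ennreal (exp (l\<^sup>2 * ((c i)\<^sup>2 * v i)))"
    if "x \<in> space (PiM I N)" for x l
    using subgaussian_lipschitz[OF coordinatewise_lipschitz_section[OF I F]] that
    by (simp add: subgaussian_def G_def space_PiM_N)
  have "(\<integral>\<^sup>+x. ennreal (exp (l * (F x - (\<integral>x. F x \<partial>PiM (insert i I) N)))) \<partial>PiM (insert i I) N)
      \<le> ennreal (exp (l\<^sup>2 * ((c i)\<^sup>2 * v i + V)))" for l
  proof -
    have "(\<integral>\<^sup>+x. ennreal (exp (l * (F x - (\<integral>x. F x \<partial>PiM (insert i I) N)))) \<partial>PiM (insert i I) N)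
        \<le> (\<integral>\<^sup>+x. ennreal (exp (l * (G x - (\<integral>x. G x \<partial>PiM I N)))) \<partial>PiM I N)
          * ennreal (exp (l\<^sup>2 * ((c i)\<^sup>2 * v i)))"
      unfolding mean using I Fm Gm fiber by (rule nn_integral_exp_PiM_insert_le)
    also have "\<dots> \<le> ennreal (exp (l\<^sup>2 * V)) * ennreal (exp (l\<^sup>2 * ((c i)\<^sup>2 * v i)))"
      using G by (intro mult_right_mono) (auto simp: subgaussian_def)
    also have "\<dots> = ennreal (exp (l\<^sup>2 * ((c i)\<^sup>2 * v i + V)))"
      by (simp add: mult_exp_exp algebra_simps flip: ennreal_mult')
    finally show ?thesis .
  qed
  with F_int show ?thesis
    by (simp add: subgaussian_def)
qed

theorem subgaussian_PiM:
  fixes F :: "('i \<Rightarrow> real) \<Rightarrow> real"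
  assumes "finite I" and "F \<in> borel_measurable (PiM I N)" and "coordinatewise_lipschitz I c F"
  shows "subgaussian (PiM I N) F (\<Sum>i\<in>I. (c i)\<^sup>2 * v i)"
  using assms(1-3)
proof (induction I arbitrary: F rule: finite_induct)
  case empty
  then show ?case
    by (simp add: PiM_empty subgaussian_def integrable_count_space nn_integral_count_space_finite
        lebesgue_integral_count_space_finite)
next
  case (insert i I)
  then show ?case
    by (simp add: subgaussian_PiM_insert)
qed

end

section \<open>Lipschitz functions of independent Gaussian variables\<close>

lemma lipschitz_concentrated_product_normal:
  assumes "\<And>i. 0 < \<sigma> i"
  shows "lipschitz_concentrated_product (\<lambda>i. normal_measure (\<mu> i) (\<sigma> i)) (\<lambda>i. (\<sigma> i)\<^sup>2)"
  by (rule lipschitz_concentrated_product.intro)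
    (simp_all add: assms prob_space_normal_density subgaussian_normal_lipschitz)

lemma (in prob_space) distr_indep_normal:
  assumes "I \<noteq> {}" and indep: "indep_vars (\<lambda>_. borel) Z I"
    and Z: "\<And>i. i \<in> I \<Longrightarrow> distributed M lborel (Z i) (normal_density (\<mu> i) (\<sigma> i))"
  shows "distr M (PiM I (\<lambda>_. borel)) (\<lambda>\<omega>. \<lambda>i\<in>I. Z i \<omega>) = PiM I (\<lambda>i. normal_measure (\<mu> i) (\<sigma> i))"
proof -
  have rv: "random_variable borel (Z i)" if "i \<in> I" for i
    using distributed_measurable[OF Z[OF that]] by simp
  have "distr M (PiM I (\<lambda>_. borel)) (\<lambda>\<omega>. \<lambda>i\<in>I. Z i \<omega>) = PiM I (\<lambda>i. distr M borel (Z i))"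
    using indep_vars_iff_distr_eq_PiM'[OF assms(1) rv] indep by simp
  also have "\<dots> = PiM I (\<lambda>i. normal_measure (\<mu> i) (\<sigma> i))"
  proof (rule PiM_cong)
    fix i assume "i \<in> I"
    then show "distr M borel (Z i) = normal_measure (\<mu> i) (\<sigma> i)"
      using distributed_distr_eq_density[OF Z] by (simp cong: distr_cong)
  qed simp
  finally show ?thesis .
qed

lemma (in prob_space) tail_lipschitz_indep_normal:
  fixes F :: "('i \<Rightarrow> real) \<Rightarrow> real"
  assumes I: "finite I" "I \<noteq> {}" and indep: "indep_vars (\<lambda>_. borel) Z I"
    and Z: "\<And>i. i \<in> I \<Longrightarrow> distributed M lborel (Z i) (normal_density (\<mu> i) (\<sigma> i))"
    and \<sigma>: "\<And>i. 0 < \<sigma> i"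
    and Fm: "F \<in> borel_measurable (PiM I (\<lambda>_. borel))" and F: "coordinatewise_lipschitz I c F"
    and v: "(\<Sum>i\<in>I. (c i)\<^sup>2 * (\<sigma> i)\<^sup>2) \<le> v" "0 < v" and t: "0 < t"
  shows "prob {\<omega> \<in> space M. t \<le> \<bar>F (\<lambda>i\<in>I. Z i \<omega>) - expectation (\<lambda>\<omega>. F (\<lambda>i\<in>I. Z i \<omega>))\<bar>}
    \<le> 2 * exp (- t\<^sup>2 / (4 * v))"
proof -
  interpret lipschitz_concentrated_product "\<lambda>i. normal_measure (\<mu> i) (\<sigma> i)" "\<lambda>i. (\<sigma> i)\<^sup>2"
    using \<sigma> by (rule lipschitz_concentrated_product_normal)
  note distr_eq = distr_indep_normal[OF I(2) indep Z]
  have \<Phi>: "(\<lambda>\<omega>. \<lambda>i\<in>I. Z i \<omega>) \<in> measurable M (PiM I (\<lambda>_. borel))"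
    using distributed_measurable[OF Z] by (intro measurable_restrict) simp
  have "F \<in> borel_measurable (PiM I (\<lambda>i. normal_measure (\<mu> i) (\<sigma> i)))"
    using Fm unfolding distr_eq[symmetric] by simp
  then have "subgaussian (PiM I (\<lambda>i. normal_measure (\<mu> i) (\<sigma> i))) F (\<Sum>i\<in>I. (c i)\<^sup>2 * (\<sigma> i)\<^sup>2)"
    using I(1) F by (intro subgaussian_PiM)
  then have "subgaussian (distr M (PiM I (\<lambda>_. borel)) (\<lambda>\<omega>. \<lambda>i\<in>I. Z i \<omega>)) F (\<Sum>i\<in>I. (c i)\<^sup>2 * (\<sigma> i)\<^sup>2)"
    by (simp only: distr_eq)
  then have "subgaussian M (\<lambda>\<omega>. F (\<lambda>i\<in>I. Z i \<omega>)) v"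
    using subgaussian_distr[OF \<Phi> Fm] v(1) by (blast intro: subgaussian_mono)
  then show ?thesis
    using v(2) t by (rule subgaussian_tail)
qed

section \<open>The statistics \<open>T11\<close> and \<open>T12\<close>\<close>

lemma real_choose_two: "real (n choose 2) = real n * (real n - 1) / 2"
  by (cases n) (auto simp: choose_two field_char_0_class.of_nat_div mod_eq_0_iff_dvd algebra_simps)

lemma sum_upper_pairs_add:
  fixes d :: "nat \<Rightarrow> real"
  shows "(\<Sum>i<n. \<Sum>j\<in>{i<..<n}. d i + d j) = (real n - 1) * (\<Sum>i<n. d i)"
proof (induction n)
  case (Suc n)
  have "{n<..<Suc n} = {}"
    by auto
  then have "(\<Sum>i<Suc n. \<Sum>j\<in>{i<..<Suc n}. d i + d j) = (\<Sum>i<n. \<Sum>j\<in>{i<..<Suc n}. d i + d j)"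
    by simp
  also have "\<dots> = (\<Sum>i<n. (\<Sum>j\<in>{i<..<n}. d i + d j) + (d i + d n))"
  proof (rule sum.cong[OF refl])
    fix i assume "i \<in> {..<n}"
    then have "{i<..<Suc n} = insert n {i<..<n}"
      by auto
    then show "(\<Sum>j\<in>{i<..<Suc n}. d i + d j) = (\<Sum>j\<in>{i<..<n}. d i + d j) + (d i + d n)"
      by (simp add: add.commute)
  qed
  also have "\<dots> = (\<Sum>i<n. \<Sum>j\<in>{i<..<n}. d i + d j) + (\<Sum>i<n. d i + d n)"
    by (rule sum.distrib)
  also have "\<dots> = (real n - 1) * (\<Sum>i<n. d i) + ((\<Sum>i<n. d i) + real n * d n)"
    unfolding Suc.IH by (simp add: sum.distrib)
  also have "\<dots> = (real (Suc n) - 1) * (\<Sum>i<Suc n. d i)"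
    by (simp add: algebra_simps)
  finally show ?case .
qed simp

lemma T11_lipschitz:
  assumes f: "L-lipschitz_on UNIV f" and n: "2 \<le> n"
  shows "\<bar>T11 f n X \<omega> - T11 f n X \<omega>'\<bar> \<le> 2 * L / real n * (\<Sum>i<n. \<bar>X i \<omega> - X i \<omega>'\<bar>)"
proof -
  define d where "d i = \<bar>X i \<omega> - X i \<omega>'\<bar>" for i
  have pair: "\<bar>f (X i \<omega> - X j \<omega>) - f (X i \<omega>' - X j \<omega>')\<bar> \<le> L * (d i + d j)" for i j
  proof -
    have "\<bar>f (X i \<omega> - X j \<omega>) - f (X i \<omega>' - X j \<omega>')\<bar> \<le> L * \<bar>(X i \<omega> - X j \<omega>) - (X i \<omega>' - X j \<omega>')\<bar>"
      using lipschitz_onD[OF f] by (simp add: dist_real_def)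
    also have "\<dots> \<le> L * (d i + d j)"
      using lipschitz_on_nonneg[OF f] by (intro mult_left_mono) (auto simp: d_def)
    finally show ?thesis .
  qed
  have "\<bar>(\<Sum>i<n. \<Sum>j\<in>{i<..<n}. f (X i \<omega> - X j \<omega>)) - (\<Sum>i<n. \<Sum>j\<in>{i<..<n}. f (X i \<omega>' - X j \<omega>'))\<bar>
      \<le> (\<Sum>i<n. \<Sum>j\<in>{i<..<n}. \<bar>f (X i \<omega> - X j \<omega>) - f (X i \<omega>' - X j \<omega>')\<bar>)"
    unfolding sum_subtractf[symmetric] by (rule order_trans[OF sum_abs sum_mono[OF sum_abs]])
  also have "\<dots> \<le> (\<Sum>i<n. \<Sum>j\<in>{i<..<n}. L * (d i + d j))"
    by (intro sum_mono pair)
  also have "\<dots> = L * (real n - 1) * (\<Sum>i<n. d i)"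
    by (simp add: sum_distrib_left[symmetric] sum_upper_pairs_add)
  finally have diff: "\<bar>(\<Sum>i<n. \<Sum>j\<in>{i<..<n}. f (X i \<omega> - X j \<omega>)) - (\<Sum>i<n. \<Sum>j\<in>{i<..<n}. f (X i \<omega>' - X j \<omega>'))\<bar>
      \<le> L * (real n - 1) * (\<Sum>i<n. d i)" .
  have C: "0 < real (n choose 2)"
    using n by (simp add: real_choose_two)
  have "\<bar>T11 f n X \<omega> - T11 f n X \<omega>'\<bar>
      = \<bar>(\<Sum>i<n. \<Sum>j\<in>{i<..<n}. f (X i \<omega> - X j \<omega>)) - (\<Sum>i<n. \<Sum>j\<in>{i<..<n}. f (X i \<omega>' - X j \<omega>'))\<bar>
        / real (n choose 2)"
    using C unfolding T11_def by (simp add: diff_divide_distrib[symmetric] abs_divide)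
  also have "\<dots> \<le> L * (real n - 1) * (\<Sum>i<n. d i) / real (n choose 2)"
    using diff C by (rule divide_right_mono[OF _ less_imp_le])
  also have "\<dots> = 2 * L / real n * (\<Sum>i<n. d i)"
    using n by (simp add: real_choose_two field_simps)
  finally show ?thesis
    unfolding d_def .
qed

lemma T12_lipschitz:
  assumes f: "L-lipschitz_on UNIV f" and "0 < n1" and "0 < n2"
  shows "\<bar>T12 f n1 n2 X Y \<omega> - T12 f n1 n2 X Y \<omega>'\<bar>
    \<le> L / real n1 * (\<Sum>i<n1. \<bar>X i \<omega> - X i \<omega>'\<bar>) + L / real n2 * (\<Sum>j<n2. \<bar>Y j \<omega> - Y j \<omega>'\<bar>)"
proof -
  have pair: "\<bar>f (X i \<omega> - Y j \<omega>) - f (X i \<omega>' - Y j \<omega>')\<bar> \<le> L * \<bar>X i \<omega> - X i \<omega>'\<bar> + L * \<bar>Y j \<omega> - Y j \<omega>'\<bar>"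
    for i j
  proof -
    have "\<bar>f (X i \<omega> - Y j \<omega>) - f (X i \<omega>' - Y j \<omega>')\<bar> \<le> L * \<bar>(X i \<omega> - Y j \<omega>) - (X i \<omega>' - Y j \<omega>')\<bar>"
      using lipschitz_onD[OF f] by (simp add: dist_real_def)
    also have "\<dots> \<le> L * (\<bar>X i \<omega> - X i \<omega>'\<bar> + \<bar>Y j \<omega> - Y j \<omega>'\<bar>)"
      using lipschitz_on_nonneg[OF f] by (intro mult_left_mono) auto
    finally show ?thesis
      by (simp add: distrib_left)
  qed
  have "\<bar>(\<Sum>i<n1. \<Sum>j<n2. f (X i \<omega> - Y j \<omega>)) - (\<Sum>i<n1. \<Sum>j<n2. f (X i \<omega>' - Y j \<omega>'))\<bar>
      \<le> (\<Sum>i<n1. \<Sum>j<n2. \<bar>f (X i \<omega> - Y j \<omega>) - f (X i \<omega>' - Y j \<omega>')\<bar>)"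
    unfolding sum_subtractf[symmetric] by (rule order_trans[OF sum_abs sum_mono[OF sum_abs]])
  also have "\<dots> \<le> (\<Sum>i<n1. \<Sum>j<n2. L * \<bar>X i \<omega> - X i \<omega>'\<bar> + L * \<bar>Y j \<omega> - Y j \<omega>'\<bar>)"
    by (intro sum_mono pair)
  also have "\<dots> = real n2 * L * (\<Sum>i<n1. \<bar>X i \<omega> - X i \<omega>'\<bar>) + real n1 * L * (\<Sum>j<n2. \<bar>Y j \<omega> - Y j \<omega>'\<bar>)"
    by (simp add: sum.distrib sum_distrib_left algebra_simps sum.swap[of _ "{..<n1}"])
  finally show ?thesis
    using assms(2,3) unfolding T12_def
    by (simp add: diff_divide_distrib[symmetric] abs_divide field_simps)
qed

lemma sum_if_image_mult:
  fixes K :: real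
  assumes "finite I" and "inj_on e A" and "e ` A \<subseteq> I"
  shows "(\<Sum>z\<in>I. (if z \<in> e ` A then K else 0) * g z) = K * (\<Sum>i\<in>A. g (e i))"
proof -
  have "(\<Sum>z\<in>I. (if z \<in> e ` A then K else 0) * g z) = (\<Sum>z\<in>e ` A. K * g z)"
    using assms(1,3) by (intro sum.mono_neutral_cong_right) auto
  also have "\<dots> = K * (\<Sum>i\<in>A. g (e i))"
    using assms(2) by (simp add: sum.reindex sum_distrib_left)
  finally show ?thesis .
qed

text \<open>Evaluated at the coordinate projections \<open>\<lambda>x. x (e i)\<close>, the statistics become functions on the
  product space, with the sample point as argument.\<close>

lemma borel_measurable_T11_coordinates:
  assumes "e ` {..<n} \<subseteq> I" and [measurable]: "f \<in> borel_measurable borel"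
  shows "T11 f n (\<lambda>i x. x (e i)) \<in> borel_measurable (PiM I (\<lambda>_. borel))"
  unfolding T11_def using assms(1)
  by (intro borel_measurable_divide borel_measurable_sum measurable_compose[OF _ assms(2)]
      borel_measurable_diff measurable_component_singleton) auto

lemma coordinatewise_lipschitz_T11:
  assumes I: "finite I" "inj_on e {..<n}" "e ` {..<n} \<subseteq> I"
    and f: "L-lipschitz_on UNIV f" and n: "2 \<le> n"
  shows "coordinatewise_lipschitz I (\<lambda>z. if z \<in> e ` {..<n} then 2 * L / real n else 0)
    (T11 f n (\<lambda>i x. x (e i)))"
  unfolding coordinatewise_lipschitz_def
proof (intro conjI ballI)
  fix x y :: "_ \<Rightarrow> real"
  have "\<bar>T11 f n (\<lambda>i x. x (e i)) x - T11 f n (\<lambda>i x. x (e i)) y\<bar> \<le> 2 * L / real n * (\<Sum>i<n. \<bar>x (e i) - y (e i)\<bar>)"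
    using f n by (rule T11_lipschitz)
  also have "\<dots> = (\<Sum>z\<in>I. (if z \<in> e ` {..<n} then 2 * L / real n else 0) * \<bar>x z - y z\<bar>)"
    using I by (rule sum_if_image_mult[symmetric])
  finally show "\<bar>T11 f n (\<lambda>i x. x (e i)) x - T11 f n (\<lambda>i x. x (e i)) y\<bar>
      \<le> (\<Sum>z\<in>I. (if z \<in> e ` {..<n} then 2 * L / real n else 0) * \<bar>x z - y z\<bar>)" .
qed (use lipschitz_on_nonneg[OF f] in simp)

lemma (in prob_space) T11_tail_indep_normal:
  fixes Z :: "'i \<Rightarrow> 'a \<Rightarrow> real" and e :: "nat \<Rightarrow> 'i"
  assumes I: "finite I" and indep: "indep_vars (\<lambda>_. borel) Z I"
    and Z: "\<And>i. i \<in> I \<Longrightarrow> distributed M lborel (Z i) (normal_density (\<mu> i) (\<sigma> i))"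
    and \<sigma>: "\<And>i. 0 < \<sigma> i"
    and e: "inj_on e {..<n}" "e ` {..<n} \<subseteq> I" and X: "\<And>i. i < n \<Longrightarrow> X i = Z (e i)"
    and \<sigma>0: "\<And>i. i < n \<Longrightarrow> (\<sigma> (e i))\<^sup>2 \<le> \<sigma>0\<^sup>2"
    and n: "2 \<le> n" and f: "L-lipschitz_on UNIV f" and t: "0 < t"
  shows "prob {\<omega> \<in> space M. t \<le> \<bar>T11 f n X \<omega> - expectation (T11 f n X)\<bar>}
    \<le> 2 * exp (- real n * t\<^sup>2 / (16 * L\<^sup>2 * \<sigma>0\<^sup>2 + 1))"
proof -
  define v where "v = (16 * L\<^sup>2 * \<sigma>0\<^sup>2 + 1) / (4 * real n)"
  have B: "0 < 16 * L\<^sup>2 * \<sigma>0\<^sup>2 + 1"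
    by (simp add: add_nonneg_pos)
  then have v: "0 < v"
    using n by (simp add: v_def)
  have "e 0 \<in> I"
    using e(2) n by (auto simp: image_subset_iff)
  then have "I \<noteq> {}"
    by auto
  have T11_eq: "T11 f n X = (\<lambda>\<omega>. T11 f n (\<lambda>i x. x (e i)) (\<lambda>i\<in>I. Z i \<omega>))"
    using e(2) by (auto simp: fun_eq_iff T11_def X image_subset_iff intro!: arg_cong2[where f = "(/)"] sum.cong)
  have "(\<Sum>z\<in>I. (if z \<in> e ` {..<n} then 2 * L / real n else 0)\<^sup>2 * (\<sigma> z)\<^sup>2)
      = (2 * L / real n)\<^sup>2 * (\<Sum>i<n. (\<sigma> (e i))\<^sup>2)"
    using sum_if_image_mult[OF I e, of "(2 * L / real n)\<^sup>2" "\<lambda>z. (\<sigma> z)\<^sup>2"]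
    by (simp add: if_distrib[of "\<lambda>a. a\<^sup>2"] cong: if_cong)
  also have "\<dots> \<le> (2 * L / real n)\<^sup>2 * (\<Sum>i<n. \<sigma>0\<^sup>2)"
    using \<sigma>0 by (intro mult_left_mono sum_mono) auto
  also have "\<dots> \<le> v"
    using n by (simp add: v_def field_simps power2_eq_square)
  finally have var: "(\<Sum>z\<in>I. (if z \<in> e ` {..<n} then 2 * L / real n else 0)\<^sup>2 * (\<sigma> z)\<^sup>2) \<le> v" .
  have "prob {\<omega> \<in> space M. t \<le> \<bar>T11 f n X \<omega> - expectation (T11 f n X)\<bar>} \<le> 2 * exp (- t\<^sup>2 / (4 * v))"
    unfolding T11_eq
    by (rule tail_lipschitz_indep_normal[OF I \<open>I \<noteq> {}\<close> indep Z \<sigma>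
          borel_measurable_T11_coordinates[OF e(2) lipschitz_on_UNIV_measurable[OF f]]
          coordinatewise_lipschitz_T11[OF I e f n] var v t])
  also have "2 * exp (- t\<^sup>2 / (4 * v)) = 2 * exp (- real n * t\<^sup>2 / (16 * L\<^sup>2 * \<sigma>0\<^sup>2 + 1))"
    using n B by (simp add: v_def field_simps)
  finally show ?thesis .
qed

lemma borel_measurable_T12_coordinates:
  assumes [measurable]: "f \<in> borel_measurable borel"
  shows "T12 f n1 n2 (\<lambda>i x. x (Inl i)) (\<lambda>j x. x (Inr j)) \<in> borel_measurable (PiM ({..<n1} <+> {..<n2}) (\<lambda>_. borel))"
  unfolding T12_def
  by (intro borel_measurable_divide borel_measurable_sum measurable_compose[OF _ assms]
      borel_measurable_diff measurable_component_singleton) auto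

lemma coordinatewise_lipschitz_T12:
  assumes f: "L-lipschitz_on UNIV f" and "0 < n1" and "0 < n2"
  shows "coordinatewise_lipschitz ({..<n1} <+> {..<n2}) (case_sum (\<lambda>_. L / real n1) (\<lambda>_. L / real n2))
    (T12 f n1 n2 (\<lambda>i x. x (Inl i)) (\<lambda>j x. x (Inr j)))"
  unfolding coordinatewise_lipschitz_def
proof (intro conjI ballI)
  fix x y :: "nat + nat \<Rightarrow> real"
  show "\<bar>T12 f n1 n2 (\<lambda>i x. x (Inl i)) (\<lambda>j x. x (Inr j)) x - T12 f n1 n2 (\<lambda>i x. x (Inl i)) (\<lambda>j x. x (Inr j)) y\<bar>
      \<le> (\<Sum>z\<in>{..<n1} <+> {..<n2}. case_sum (\<lambda>_. L / real n1) (\<lambda>_. L / real n2) z * \<bar>x z - y z\<bar>)"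
    using T12_lipschitz[OF assms, of "\<lambda>i x. x (Inl i)" "\<lambda>j x. x (Inr j)" x y]
    by (simp add: sum.Plus sum_distrib_left)
qed (use lipschitz_on_nonneg[OF f] in auto)

lemma two_sample_normal_indep_family:
  assumes "two_sample_normal M n1 n2 X Y mu1 s1 mu2 s2"
  shows "prob_space M"
    and "prob_space.indep_vars M (\<lambda>_. borel) (case_sum X Y) ({..<n1} <+> {..<n2})"
    and "\<And>z. z \<in> {..<n1} <+> {..<n2} \<Longrightarrow> distributed M lborel (case_sum X Y z)
      (normal_density (case_sum (\<lambda>_. mu1) (\<lambda>_. mu2) z) (case_sum (\<lambda>_. s1) (\<lambda>_. s2) z))"
    and "\<And>z. 0 < case_sum (\<lambda>_. s1) (\<lambda>_. s2) z"
  using assms unfolding two_sample_normal_def by (auto split: sum.split)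

lemma two_sample_normal_T11_tail:
  assumes two: "two_sample_normal M n1 n2 X Y mu1 s1 mu2 s2"
    and "s1\<^sup>2 \<le> \<sigma>0\<^sup>2" "s2\<^sup>2 \<le> \<sigma>0\<^sup>2" "2 \<le> n1" "2 \<le> n2" "L-lipschitz_on UNIV f" "0 < t"
  shows "prob_space.prob M {\<omega> \<in> space M. \<bar>T11 f n1 X \<omega> - prob_space.expectation M (T11 f n1 X)\<bar> \<ge> t}
      \<le> 2 * exp (- real n1 * t\<^sup>2 / (16 * L\<^sup>2 * \<sigma>0\<^sup>2 + 1))"
    and "prob_space.prob M {\<omega> \<in> space M. \<bar>T11 f n2 Y \<omega> - prob_space.expectation M (T11 f n2 Y)\<bar> \<ge> t}
      \<le> 2 * exp (- real n2 * t\<^sup>2 / (16 * L\<^sup>2 * \<sigma>0\<^sup>2 + 1))"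
proof -
  interpret prob_space M
    using two by (rule two_sample_normal_indep_family)
  note family = two_sample_normal_indep_family(2-4)[OF two]
  show "prob {\<omega> \<in> space M. \<bar>T11 f n1 X \<omega> - expectation (T11 f n1 X)\<bar> \<ge> t}
      \<le> 2 * exp (- real n1 * t\<^sup>2 / (16 * L\<^sup>2 * \<sigma>0\<^sup>2 + 1))"
    by (rule T11_tail_indep_normal[OF _ family, where e = Inl]) (use assms in auto)
  show "prob {\<omega> \<in> space M. \<bar>T11 f n2 Y \<omega> - expectation (T11 f n2 Y)\<bar> \<ge> t}
      \<le> 2 * exp (- real n2 * t\<^sup>2 / (16 * L\<^sup>2 * \<sigma>0\<^sup>2 + 1))"
    by (rule T11_tail_indep_normal[OF _ family, where e = Inr]) (use assms in auto)
qed

lemma two_sample_normal_T12_tail: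
  assumes two: "two_sample_normal M n1 n2 X Y mu1 s1 mu2 s2"
    and s: "s1\<^sup>2 \<le> \<sigma>0\<^sup>2" "s2\<^sup>2 \<le> \<sigma>0\<^sup>2" and n: "2 \<le> n1" "2 \<le> n2"
    and f: "L-lipschitz_on UNIV f" and t: "0 < t"
  shows "prob_space.prob M {\<omega> \<in> space M. \<bar>T12 f n1 n2 X Y \<omega> - prob_space.expectation M (T12 f n1 n2 X Y)\<bar> \<ge> t}
      \<le> 2 * exp (- real (min n1 n2) * t\<^sup>2 / (8 * L\<^sup>2 * \<sigma>0\<^sup>2 + 1))"
proof -
  interpret prob_space M
    using two by (rule two_sample_normal_indep_family)
  note family = two_sample_normal_indep_family(2-4)[OF two]
  define I where "I = {..<n1} <+> {..<n2}"
  define m where "m = min n1 n2"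
  define v where "v = (8 * L\<^sup>2 * \<sigma>0\<^sup>2 + 1) / (4 * real m)"
  have m: "2 \<le> m"
    using n by (simp add: m_def)
  have B: "0 < 8 * L\<^sup>2 * \<sigma>0\<^sup>2 + 1"
    by (simp add: add_nonneg_pos)
  then have v: "0 < v"
    using m by (simp add: v_def)
  have "Inl 0 \<in> I"
    unfolding I_def using n by (intro InlI) simp
  then have "I \<noteq> {}"
    by auto
  have T12_eq: "T12 f n1 n2 X Y = (\<lambda>\<omega>. T12 f n1 n2 (\<lambda>i x. x (Inl i)) (\<lambda>j x. x (Inr j)) (\<lambda>z\<in>I. case_sum X Y z \<omega>))"
    by (auto simp: fun_eq_iff T12_def I_def intro!: arg_cong2[where f = "(/)"] sum.cong)
  have "(\<Sum>z\<in>I. (case_sum (\<lambda>_. L / real n1) (\<lambda>_. L / real n2) z)\<^sup>2 * (case_sum (\<lambda>_. s1) (\<lambda>_. s2) z)\<^sup>2)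
      = L\<^sup>2 * s1\<^sup>2 / real n1 + L\<^sup>2 * s2\<^sup>2 / real n2"
    using n by (simp add: I_def sum.Plus field_simps power2_eq_square)
  also have "\<dots> \<le> L\<^sup>2 * \<sigma>0\<^sup>2 / real m + L\<^sup>2 * \<sigma>0\<^sup>2 / real m"
    using s m by (intro add_mono frac_le mult_left_mono) (auto simp: m_def)
  also have "\<dots> \<le> v"
    using m by (simp add: v_def field_simps)
  finally have var: "(\<Sum>z\<in>I. (case_sum (\<lambda>_. L / real n1) (\<lambda>_. L / real n2) z)\<^sup>2
      * (case_sum (\<lambda>_. s1) (\<lambda>_. s2) z)\<^sup>2) \<le> v" .
  have "prob {\<omega> \<in> space M. \<bar>T12 f n1 n2 X Y \<omega> - expectation (T12 f n1 n2 X Y)\<bar> \<ge> t} \<le> 2 * exp (- t\<^sup>2 / (4 * v))"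
    unfolding T12_eq
  proof (rule tail_lipschitz_indep_normal[OF _ \<open>I \<noteq> {}\<close> family[folded I_def] _ _ var v t])
    show "finite I"
      by (simp add: I_def)
    show "T12 f n1 n2 (\<lambda>i x. x (Inl i)) (\<lambda>j x. x (Inr j)) \<in> borel_measurable (PiM I (\<lambda>_. borel))"
      unfolding I_def using f by (intro borel_measurable_T12_coordinates lipschitz_on_UNIV_measurable)
    show "coordinatewise_lipschitz I (case_sum (\<lambda>_. L / real n1) (\<lambda>_. L / real n2))
        (T12 f n1 n2 (\<lambda>i x. x (Inl i)) (\<lambda>j x. x (Inr j)))"
      unfolding I_def using f n by (intro coordinatewise_lipschitz_T12) auto
  qed
  also have "2 * exp (- t\<^sup>2 / (4 * v)) = 2 * exp (- real (min n1 n2) * t\<^sup>2 / (8 * L\<^sup>2 * \<sigma>0\<^sup>2 + 1))"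
    using m B by (simp add: v_def m_def field_simps)
  finally show ?thesis .
qed

theorem lemma8:
  fixes L \<sigma>0 :: real
  assumes "0 \<le> L" and "0 < \<sigma>0"
  shows "\<exists>B1>0. \<exists>B2>0. \<forall>(M :: 'a measure) n1 n2 X Y mu1 s1 mu2 s2 (f :: real \<Rightarrow> real) t.
    two_sample_normal M n1 n2 X Y mu1 s1 mu2 s2 \<and> s1\<^sup>2 \<le> \<sigma>0\<^sup>2 \<and> s2\<^sup>2 \<le> \<sigma>0\<^sup>2 \<and>
    2 \<le> n1 \<and> 2 \<le> n2 \<and> L-lipschitz_on UNIV f \<and> 0 < t \<longrightarrow>
      prob_space.prob M {\<omega> \<in> space M. \<bar>T11 f n1 X \<omega> - prob_space.expectation M (T11 f n1 X)\<bar> \<ge> t}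
        \<le> 2 * exp (- real n1 * t\<^sup>2 / B1) \<and>
      prob_space.prob M {\<omega> \<in> space M. \<bar>T11 f n2 Y \<omega> - prob_space.expectation M (T11 f n2 Y)\<bar> \<ge> t}
        \<le> 2 * exp (- real n2 * t\<^sup>2 / B1) \<and>
      prob_space.prob M {\<omega> \<in> space M. \<bar>T12 f n1 n2 X Y \<omega> - prob_space.expectation M (T12 f n1 n2 X Y)\<bar> \<ge> t}
        \<le> 2 * exp (- real (min n1 n2) * t\<^sup>2 / B2)"
proof -
  have tails: "prob_space.prob M {\<omega> \<in> space M. \<bar>T11 f n1 X \<omega> - prob_space.expectation M (T11 f n1 X)\<bar> \<ge> t}
        \<le> 2 * exp (- real n1 * t\<^sup>2 / (16 * L\<^sup>2 * \<sigma>0\<^sup>2 + 1)) \<and>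
      prob_space.prob M {\<omega> \<in> space M. \<bar>T11 f n2 Y \<omega> - prob_space.expectation M (T11 f n2 Y)\<bar> \<ge> t}
        \<le> 2 * exp (- real n2 * t\<^sup>2 / (16 * L\<^sup>2 * \<sigma>0\<^sup>2 + 1)) \<and>
      prob_space.prob M {\<omega> \<in> space M. \<bar>T12 f n1 n2 X Y \<omega> - prob_space.expectation M (T12 f n1 n2 X Y)\<bar> \<ge> t}
        \<le> 2 * exp (- real (min n1 n2) * t\<^sup>2 / (8 * L\<^sup>2 * \<sigma>0\<^sup>2 + 1))"
    if "two_sample_normal M n1 n2 X Y mu1 s1 mu2 s2" "s1\<^sup>2 \<le> \<sigma>0\<^sup>2" "s2\<^sup>2 \<le> \<sigma>0\<^sup>2"
      "2 \<le> n1" "2 \<le> n2" "L-lipschitz_on UNIV f" "0 < t"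
    for M :: "'a measure" and n1 n2 X Y mu1 s1 mu2 s2 and f :: "real \<Rightarrow> real" and t
    using two_sample_normal_T11_tail[OF that] two_sample_normal_T12_tail[OF that] by blast
  \<comment> \<open>the \<open>+ 1\<close> keeps the constants positive for \<open>L = 0\<close>\<close>
  have "0 < 16 * L\<^sup>2 * \<sigma>0\<^sup>2 + 1" and "0 < 8 * L\<^sup>2 * \<sigma>0\<^sup>2 + 1"
    by (simp_all add: add_nonneg_pos)
  with tails show ?thesis
    by blast
qed

end
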